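(* **Part (a).** Let $R\in\mathfrak{D}'\subseteq\mathfrak{D}$ with $\mathfrak{G}_{\mathfrak{D}'}(R)\subseteq\mathfrak{D}'$, where $$\mathfrak{G}_{\mathfrak{D}'}(R)=\{\mathcal{G}(\xi):\xi\in\mathcal{H}(G,R),\ G\in\mathfrak{D}'\}.$$ Then for every $S\in\mathfrak{D}$, the relation $R\sqsubseteq_\Gamma S$ with respect to $\mathfrak{D}'$ holds if and only if for every $\mathfrak{g}\in\mathfrak{G}_{\mathfrak{D}'}(R)$ there exists an injective map $\sigma_{\mathfrak{g}}:\mathcal{S}(\mathfrak{g},R)\to\mathcal{S}(\mathfrak{g},S)$. In this case, a strong $\Gamma$-scheme $\rho$ from $R$ to $S$ with respect to $\mathfrak{D}'$ is given by $$\rho_G(\xi)=\sigma_{\mathcal{G}(\xi)}(\iota_\xi)\circ\pi_\xi\quad\text{for } G\in\mathfrak{D}'_r,\ \xi\in\mathcal{H}(G,R).$$ **Part (b).** Let $\mathfrak{D}'\subseteq\mathfrak{P}$ or $\mathfrak{D}'\subseteq\mathfrak{P}^*$, and let $R\in\mathfrak{D}'$. Put $$\mathfrak{T}_{\mathfrak{D}'}(R)=\{\mathcal{T}(\xi):\xi\in\mathcal{H}(G,R),\ G\in\mathfrak{D}'\},$$ and assume $\mathfrak{T}_{\mathfrak{D}'}(R)\subseteq\mathfrak{D}'$. Then for every $S\in\mathfrak{D}$, $R\sqsubseteq_\Gamma S$ with respect to $\mathfrak{D}'$ holds if and only if for every $\mathfrak{t}\in\mathfrak{T}_{\mathfrak{D}'}(R)$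 there exists an injective map $\sigma_{\mathfrak{t}}:\mathcal{S}(\mathfrak{t},R)\to\mathcal{S}(\mathfrak{t},S)$. In this case, $\rho_G(\xi)=\sigma_{\mathcal{T}(\xi)}(\iota_\xi)\circ\pi_\xi$ defines a strong $\Gamma$-scheme from $R$ to $S$ with respect to $\mathfrak{D}'$. Here $\iota_\xi$ is regarded as a map on $V(\mathcal{T}(\xi))=V(\mathcal{G}(\xi))$.
   Context: **Digraphs and homomorphisms.** - A digraph $G$ is a pair $(V(G),A(G))$, where $V(G)$ is a finite non-empty set and $A(G)\subseteq V(G)\times V(G)$. Arcs are written $vw$. - An arc $vv$ is a loop. An arc $vw$ with $v\ne w$ is proper. $G^*$ is $G$ with all loops removed. - A homomorphism $\xi:G\to H$ is a map $V(G)\to V(H)$ with $\xi(v)\xi(w)\in A(H)$ for all $vw\in A(G)$. $\mathcal{H}(G,H)$ is the set of homomorphisms. - A homomorphism is strict if it maps every proper arc to a proper arc. $\mathcal{S}(G,H)$ is the set of strict homomorphisms. - The transitive hull of a digraph $G$ is the digraph on $V(G)$ whose arc set is the smallest transitive relation containing $A(G)$. **Classes of digraphs.** - $\mathfrak{D}$ is the class of all digraphs. - $\mathfrak{P}$ is the class of finite posets, i.e. reflexive, antisymmetric, transitive digraphs. - $\mathfrak{P}^*=\{P^*:P\in\mathfrak{P}\}$. **Connectivity.** - Two vertices $u,w$ are adjacent if $uw\in A(G)$ or $wu\in A(G)$. - For $X\subseteq V(G)$ and $v,w\in X$, the vertices $v$ and $w$ are connected in $X$ if $v=w$, or if there are $z_0=v,\dots,z_I=w$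 in $X$ with consecutive terms adjacent. - $\gamma_X(v)$ is the set of $w\in X$ connected to $v$ in $X$. - $\Gamma_\xi(v):=\gamma_{\xi^{-1}(\xi(v))}(v)$. **The quotient digraph.** For $\xi\in\mathcal{H}(G,H)$: - $\mathcal{G}(\xi)$ is the digraph with vertex set $\{\Gamma_\xi(v):v\in V(G)\}$, and $\mathfrak{a}\mathfrak{b}$ is an arc iff there are $a\in\mathfrak{a}$, $b\in\mathfrak{b}$ with $ab\in A(G)$. - $\mathcal{T}(\xi)$ is the transitive hull of $\mathcal{G}(\xi)$. - $\pi_\xi$ is the map $v\mapsto\Gamma_\xi(v)$. - $\iota_\xi$ is the map $\Gamma_\xi(v)\mapsto\xi(v)$. **Schemes.** - $\mathfrak{D}'_r$ is a fixed system of representatives of $\mathfrak{D}'$ up to isomorphism. - A Hom-scheme from $R$ to $S$ with respect to $\mathfrak{D}'$ is a family of maps $\rho_G:\mathcal{H}(G,R)\to\mathcal{H}(G,S)$, $G\in\mathfrak{D}'_r$. - It is strong if all $\rho_G$ are injective. - It is a $\Gamma$-scheme if $\Gamma_{\rho_G(\xi)}(v)=\Gamma_\xi(v)$ for all $G$, $\xi$ and $v$. - $R\sqsubseteq_\Gamma S$ with respect to $\mathfrak{D}'$ means that a strong $\Gamma$-scheme exists. *)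

theory Defs
  imports "HOL-Library.FuncSet"
begin

type_synonym 'v digraph = "'v set \<times> ('v \<times> 'v) set"

definition verts :: "'v digraph \<Rightarrow> 'v set" where "verts G = fst G"
definition arcs :: "'v digraph \<Rightarrow> ('v \<times> 'v) set" where "arcs G = snd G"

definition is_digraph :: "'v digraph \<Rightarrow> bool" where
  "is_digraph G \<longleftrightarrow> finite (verts G) \<and> verts G \<noteq> {} \<and> arcs G \<subseteq> verts G \<times> verts G"

definition remove_loops :: "'v digraph \<Rightarrow> 'v digraph" where
  "remove_loops G = (verts G, {(v,w) \<in> arcs G. v \<noteq> w})"

definition is_poset :: "'v digraph \<Rightarrow> bool" where
  "is_poset G \<longleftrightarrow> is_digraph G \<and> refl_on (verts G) (arcs G) \<and> antisym (arcs G) \<and> trans (arcs G)"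

definition is_poset_star :: "'v digraph \<Rightarrow> bool" where
  "is_poset_star G \<longleftrightarrow> (\<exists>P::'v digraph. is_poset P \<and> G = remove_loops P)"

definition Hom :: "'a digraph \<Rightarrow> 'b digraph \<Rightarrow> ('a \<Rightarrow> 'b) set" where
  "Hom G H = {\<xi> \<in> verts G \<rightarrow>\<^sub>E verts H. \<forall>(v,w) \<in> arcs G. (\<xi> v, \<xi> w) \<in> arcs H}"

definition Strict :: "'a digraph \<Rightarrow> 'b digraph \<Rightarrow> ('a \<Rightarrow> 'b) set" where
  "Strict G H = {\<xi> \<in> Hom G H. \<forall>(v,w) \<in> arcs G. v \<noteq> w \<longrightarrow> \<xi> v \<noteq> \<xi> w}"

definition digraph_iso :: "'a digraph \<Rightarrow> 'b digraph \<Rightarrow> bool" where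
  "digraph_iso G H \<longleftrightarrow> (\<exists>f. bij_betw f (verts G) (verts H) \<and>
     (\<forall>v \<in> verts G. \<forall>w \<in> verts G. (v,w) \<in> arcs G \<longleftrightarrow> (f v, f w) \<in> arcs H))"

text \<open>A class of digraphs is represented by a set of digraphs on vertex type nat;
  a digraph of arbitrary vertex type belongs to the class iff it is isomorphic
  to a member (classes are taken up to isomorphism).\<close>
definition in_class :: "nat digraph set \<Rightarrow> 'v digraph \<Rightarrow> bool" where
  "in_class C H \<longleftrightarrow> (\<exists>G \<in> C. digraph_iso G H)"

definition is_rep_system :: "nat digraph set \<Rightarrow> nat digraph set \<Rightarrow> bool" where
  "is_rep_system C Cr \<longleftrightarrow> Cr \<subseteq> C \<and> (\<forall>G \<in> C. \<exists>!H. H \<in> Cr \<and> digraph_iso G H)"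

definition adjacent :: "'v digraph \<Rightarrow> 'v \<Rightarrow> 'v \<Rightarrow> bool" where
  "adjacent G u w \<longleftrightarrow> (u,w) \<in> arcs G \<or> (w,u) \<in> arcs G"

definition connected_in :: "'v digraph \<Rightarrow> 'v set \<Rightarrow> 'v \<Rightarrow> 'v \<Rightarrow> bool" where
  "connected_in G X v w \<longleftrightarrow> v = w \<or>
     (\<exists>z::nat \<Rightarrow> 'v. \<exists>I. z 0 = v \<and> z I = w \<and> (\<forall>i\<le>I. z i \<in> X) \<and>
        (\<forall>i<I. adjacent G (z i) (z (Suc i))))"

definition gamma :: "'v digraph \<Rightarrow> 'v set \<Rightarrow> 'v \<Rightarrow> 'v set" where
  "gamma G X v = {w \<in> X. connected_in G X v w}"

definition Gam :: "'v digraph \<Rightarrow> ('v \<Rightarrow> 'b) \<Rightarrow> 'v \<Rightarrow> 'v set" where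
  "Gam G \<xi> v = gamma G {w \<in> verts G. \<xi> w = \<xi> v} v"

definition quot :: "'v digraph \<Rightarrow> ('v \<Rightarrow> 'b) \<Rightarrow> 'v set digraph" where
  "quot G \<xi> = (let Q = Gam G \<xi> ` verts G in
     (Q, {(a,b). a \<in> Q \<and> b \<in> Q \<and> (\<exists>x\<in>a. \<exists>y\<in>b. (x,y) \<in> arcs G)}))"

definition tquot :: "'v digraph \<Rightarrow> ('v \<Rightarrow> 'b) \<Rightarrow> 'v set digraph" where
  "tquot G \<xi> = (verts (quot G \<xi>), (arcs (quot G \<xi>))\<^sup>+)"

definition pi_map :: "'v digraph \<Rightarrow> ('v \<Rightarrow> 'b) \<Rightarrow> 'v \<Rightarrow> 'v set" where
  "pi_map G \<xi> = (\<lambda>v \<in> verts G. Gam G \<xi> v)"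

definition iota_map :: "'v digraph \<Rightarrow> ('v \<Rightarrow> 'b) \<Rightarrow> 'v set \<Rightarrow> 'b" where
  "iota_map G \<xi> = (\<lambda>c \<in> verts (quot G \<xi>). \<xi> (SOME v. v \<in> verts G \<and> c = Gam G \<xi> v))"

definition strong_Gamma_scheme ::
  "nat digraph set \<Rightarrow> 'r digraph \<Rightarrow> 's digraph \<Rightarrow> (nat digraph \<Rightarrow> (nat \<Rightarrow> 'r) \<Rightarrow> (nat \<Rightarrow> 's)) \<Rightarrow> bool" where
  "strong_Gamma_scheme Cr R S \<rho> \<longleftrightarrow> (\<forall>G \<in> Cr.
      (\<forall>\<xi> \<in> Hom G R. \<rho> G \<xi> \<in> Hom G S) \<and>
      inj_on (\<rho> G) (Hom G R) \<and>
      (\<forall>\<xi> \<in> Hom G R. \<forall>v \<in> verts G. Gam G (\<rho> G \<xi>) v = Gam G \<xi> v))"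

definition Gamma_below :: "nat digraph set \<Rightarrow> 'r digraph \<Rightarrow> 's digraph \<Rightarrow> bool" where
  "Gamma_below Cr R S \<longleftrightarrow> (\<exists>\<rho>. strong_Gamma_scheme Cr R S \<rho>)"

end

theory Submission
  imports Defs "HOL-Library.Equipollence"
begin

text \<open>Every homomorphism \<open>\<xi> : G \<rightarrow> R\<close> factors as \<open>\<iota>\<^sub>\<xi> \<circ> \<pi>\<^sub>\<xi>\<close>, where \<open>\<pi>\<^sub>\<xi>\<close> collapses the
  \<open>\<Gamma>\<close>-classes and \<open>\<iota>\<^sub>\<xi>\<close> is a strict homomorphism on the quotient \<open>\<G>(\<xi>)\<close>; if \<open>R\<close> is
  transitive and antisymmetric, \<open>\<iota>\<^sub>\<xi>\<close> is even strict on the transitive hull \<open>\<T>(\<xi>)\<close>.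
  Conversely, for any strict homomorphism \<open>\<tau>\<close> of the quotient into \<open>S\<close>, the map \<open>\<tau> \<circ> \<pi>\<^sub>\<xi>\<close>
  has the same \<open>\<Gamma>\<close>-classes as \<open>\<xi>\<close>, and \<open>\<xi>\<close> is determined by its \<open>\<Gamma>\<close>-classes together
  with \<open>\<iota>\<^sub>\<xi>\<close>. So injections \<open>\<sigma>\<close> between strict homomorphisms of the quotients yield the
  strong \<open>\<Gamma>\<close>-scheme \<open>\<xi> \<mapsto> \<sigma>(\<iota>\<^sub>\<xi>) \<circ> \<pi>\<^sub>\<xi>\<close>. For the converse, strict homomorphisms are
  exactly the homomorphisms all of whose \<open>\<Gamma>\<close>-classes are singletons, so a \<open>\<Gamma>\<close>-scheme
  restricts to an injection between strict homomorphisms on each representative, which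
  transports along isomorphisms to every member of the class.\<close>

definition adjacency_within :: "'v digraph \<Rightarrow> 'v set \<Rightarrow> ('v \<times> 'v) set" where
  "adjacency_within G X = {(a,b). a \<in> X \<and> b \<in> X \<and> adjacent G a b}"

lemma connected_in_imp_rtrancl:
  assumes "connected_in G X v w"
  shows "(v,w) \<in> (adjacency_within G X)\<^sup>*"
  using assms unfolding connected_in_def
proof (elim disjE exE conjE)
  fix z I assume "z 0 = v" "z I = w" "\<forall>i\<le>I. z i \<in> X"
    and "\<forall>i<I. adjacent G (z i) (z (Suc i))"
  then have "\<forall>i<I. (z i, z (Suc i)) \<in> adjacency_within G X"
    by (auto simp: adjacency_within_def Suc_leI)
  with \<open>z 0 = v\<close> \<open>z I = w\<close> have "(v,w) \<in> adjacency_within G X ^^ I"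
    unfolding relpow_fun_conv by blast
  then show ?thesis
    using rtrancl_power by blast
qed simp

lemma rtrancl_imp_connected_in:
  assumes "(v,w) \<in> (adjacency_within G X)\<^sup>*"
  shows "connected_in G X v w"
proof (cases "v = w")
  case False
  obtain I where "(v,w) \<in> adjacency_within G X ^^ I"
    using assms by (metis rtrancl_power)
  then obtain z where z: "z 0 = v" "z I = w" "\<forall>i<I. (z i, z (Suc i)) \<in> adjacency_within G X"
    unfolding relpow_fun_conv by blast
  \<comment> \<open>as \<open>v \<noteq> w\<close>, the path has an arc, and every vertex on it is an endpoint of one\<close>
  have "z i \<in> X" if "i \<le> I" for i
  proof (cases "i < I")
    case True
    then show ?thesis using z(3) by (auto simp: adjacency_within_def)
  next
    case False
    with \<open>i \<le> I\<close> \<open>v \<noteq> w\<close> z(1,2) obtain j where "j < I" "i = Suc j"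
      by (metis le_neq_implies_less lessI not0_implies_Suc)
    then show ?thesis using z(3) by (auto simp: adjacency_within_def)
  qed
  then show ?thesis
    using z unfolding connected_in_def adjacency_within_def by auto
qed (simp add: connected_in_def)

lemma connected_in_iff_rtrancl:
  "connected_in G X v w \<longleftrightarrow> (v,w) \<in> (adjacency_within G X)\<^sup>*"
  by (rule iffI[OF connected_in_imp_rtrancl rtrancl_imp_connected_in])

text \<open>\<open>Gam G f v\<close> is the class of \<open>v\<close> under the reflexive transitive closure of this
  relation, which, unlike the vertex set in the definition of \<open>Gam\<close>, does not depend on \<open>v\<close>.\<close>

definition fibre_adjacency :: "'v digraph \<Rightarrow> ('v \<Rightarrow> 'b) \<Rightarrow> ('v \<times> 'v) set" where
  "fibre_adjacency G f = {(a,b). a \<in> verts G \<and> b \<in> verts G \<and> adjacent G a b \<and> f a = f b}"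

lemma rtrancl_fibre_adjacency_imp_fibre:
  assumes "(v,w) \<in> (fibre_adjacency G f)\<^sup>*" and "v \<in> verts G"
  shows "w \<in> verts G \<and> f w = f v"
  using assms by (induction rule: rtrancl_induct) (auto simp: fibre_adjacency_def)

lemma Gam_eq_rtrancl:
  assumes v: "v \<in> verts G"
  shows "Gam G f v = (fibre_adjacency G f)\<^sup>* `` {v}"
proof -
  let ?X = "{w \<in> verts G. f w = f v}"
  have "(v,w) \<in> (adjacency_within G ?X)\<^sup>*" if "(v,w) \<in> (fibre_adjacency G f)\<^sup>*" for w
    using that
  proof (induction rule: rtrancl_induct)
    case (step b c)
    then have "(b,c) \<in> adjacency_within G ?X"
      using rtrancl_fibre_adjacency_imp_fibre[OF step.hyps(1) v]
      by (auto simp: adjacency_within_def fibre_adjacency_def)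
    with step.IH show ?case by (rule rtrancl_into_rtrancl)
  qed simp
  moreover have "adjacency_within G ?X \<subseteq> fibre_adjacency G f"
    by (auto simp: adjacency_within_def fibre_adjacency_def)
  ultimately show ?thesis
    unfolding Gam_def gamma_def connected_in_iff_rtrancl
    using rtrancl_mono rtrancl_fibre_adjacency_imp_fibre[OF _ v] by blast
qed

lemma mem_Gam_self: "v \<in> verts G \<Longrightarrow> v \<in> Gam G f v"
  by (simp add: Gam_eq_rtrancl)

lemma mem_Gam_imp_fibre: "v \<in> verts G \<Longrightarrow> w \<in> Gam G f v \<Longrightarrow> w \<in> verts G \<and> f w = f v"
  by (auto simp: Gam_eq_rtrancl dest: rtrancl_fibre_adjacency_imp_fibre)

lemma mem_Gam_if_adjacent:
  "v \<in> verts G \<Longrightarrow> w \<in> verts G \<Longrightarrow> adjacent G v w \<Longrightarrow> f v = f w \<Longrightarrow> w \<in> Gam G f v"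
  by (auto simp: Gam_eq_rtrancl fibre_adjacency_def)

lemma Gam_eq_if_mem:
  assumes v: "v \<in> verts G" and w: "w \<in> Gam G f v"
  shows "Gam G f w = Gam G f v"
proof -
  have "sym ((fibre_adjacency G f)\<^sup>*)"
    by (rule sym_rtrancl) (auto simp: sym_def fibre_adjacency_def adjacent_def)
  moreover have "(v,w) \<in> (fibre_adjacency G f)\<^sup>*"
    using w by (simp add: Gam_eq_rtrancl[OF v])
  moreover have "w \<in> verts G"
    using mem_Gam_imp_fibre[OF v w] by simp
  ultimately show ?thesis
    unfolding Gam_eq_rtrancl[OF v] Gam_eq_rtrancl[OF \<open>w \<in> verts G\<close>]
    by (auto dest: symD intro: rtrancl_trans)
qed

lemma Gam_cong:
  assumes "v \<in> verts G"
    and "\<And>a b. a \<in> verts G \<Longrightarrow> b \<in> verts G \<Longrightarrow> adjacent G a b \<Longrightarrow> f a = f b \<longleftrightarrow> h a = h b"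
  shows "Gam G f v = Gam G h v"
proof -
  have "fibre_adjacency G f = fibre_adjacency G h"
    using assms(2) by (auto simp: fibre_adjacency_def)
  then show ?thesis by (simp add: Gam_eq_rtrancl[OF assms(1)])
qed

lemma adjacent_Gam_eq_iff:
  assumes a: "a \<in> verts G" and b: "b \<in> verts G" and "adjacent G a b"
  shows "Gam G f a = Gam G f b \<longleftrightarrow> f a = f b"
proof
  assume "Gam G f a = Gam G f b"
  then have "b \<in> Gam G f a"
    using mem_Gam_self[OF b] by simp
  then show "f a = f b"
    using mem_Gam_imp_fibre[OF a, of b f] by simp
next
  assume "f a = f b"
  then have "b \<in> Gam G f a"
    using assms by (intro mem_Gam_if_adjacent)
  then show "Gam G f a = Gam G f b"
    using Gam_eq_if_mem[OF a] by metis
qed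

lemma HomD: "\<zeta> \<in> Hom G H \<Longrightarrow> (v,w) \<in> arcs G \<Longrightarrow> (\<zeta> v, \<zeta> w) \<in> arcs H"
  unfolding Hom_def by auto

lemma Hom_vertex: "\<zeta> \<in> Hom G H \<Longrightarrow> v \<in> verts G \<Longrightarrow> \<zeta> v \<in> verts H"
  unfolding Hom_def by auto

lemma HomI:
  "\<zeta> \<in> verts G \<rightarrow>\<^sub>E verts H \<Longrightarrow> (\<And>v w. (v,w) \<in> arcs G \<Longrightarrow> (\<zeta> v, \<zeta> w) \<in> arcs H) \<Longrightarrow> \<zeta> \<in> Hom G H"
  unfolding Hom_def by auto

lemma Hom_eqI:
  "\<zeta>1 \<in> Hom G H \<Longrightarrow> \<zeta>2 \<in> Hom G H \<Longrightarrow> (\<And>v. v \<in> verts G \<Longrightarrow> \<zeta>1 v = \<zeta>2 v) \<Longrightarrow> \<zeta>1 = \<zeta>2"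
  unfolding Hom_def by (auto intro: extensionalityI[of _ "verts G"] simp: PiE_def)

lemma StrictI:
  "\<zeta> \<in> Hom G H \<Longrightarrow> (\<And>v w. (v,w) \<in> arcs G \<Longrightarrow> v \<noteq> w \<Longrightarrow> \<zeta> v \<noteq> \<zeta> w) \<Longrightarrow> \<zeta> \<in> Strict G H"
  unfolding Strict_def by auto

lemma StrictD: "\<zeta> \<in> Strict G H \<Longrightarrow> (v,w) \<in> arcs G \<Longrightarrow> v \<noteq> w \<Longrightarrow> \<zeta> v \<noteq> \<zeta> w"
  unfolding Strict_def by auto

lemma Strict_imp_Hom: "\<zeta> \<in> Strict G H \<Longrightarrow> \<zeta> \<in> Hom G H"
  unfolding Strict_def by auto

lemma Strict_antimono:
  assumes "verts G = verts G'" and "arcs G \<subseteq> arcs G'"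
  shows "Strict G' H \<subseteq> Strict G H"
  using assms unfolding Strict_def Hom_def by auto

lemma Strict_iff_Gam_singleton:
  assumes G: "arcs G \<subseteq> verts G \<times> verts G" and \<zeta>: "\<zeta> \<in> Hom G H"
  shows "\<zeta> \<in> Strict G H \<longleftrightarrow> (\<forall>v\<in>verts G. Gam G \<zeta> v = {v})"
proof
  assume "\<zeta> \<in> Strict G H"
  then have "fibre_adjacency G \<zeta> \<subseteq> Id"
    by (auto simp: fibre_adjacency_def adjacent_def dest: StrictD)
  then have "(fibre_adjacency G \<zeta>)\<^sup>* \<subseteq> Id"
    using rtrancl_subset_rtrancl[of _ "{}"] by simp
  then show "\<forall>v\<in>verts G. Gam G \<zeta> v = {v}"
    using mem_Gam_self by (fastforce simp: Gam_eq_rtrancl)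
next
  assume singletons: "\<forall>v\<in>verts G. Gam G \<zeta> v = {v}"
  show "\<zeta> \<in> Strict G H"
  proof (rule StrictI[OF \<zeta>])
    fix v w assume "(v,w) \<in> arcs G" and "v \<noteq> w"
    then show "\<zeta> v \<noteq> \<zeta> w"
      using G singletons mem_Gam_if_adjacent[of v G w \<zeta>] by (auto simp: adjacent_def)
  qed
qed

lemma Strict_trancl:
  assumes \<phi>: "\<phi> \<in> Strict G R" and "trans (arcs R)" and "antisym (arcs R)"
  shows "\<phi> \<in> Strict (verts G, (arcs G)\<^sup>+) R"
proof -
  let ?E = "arcs G"
  have hom: "\<phi> \<in> Hom G R" by (rule Strict_imp_Hom[OF \<phi>])
  have arc: "(\<phi> a, \<phi> b) \<in> arcs R" if "(a,b) \<in> ?E\<^sup>+" for a b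
    using that
  proof (induction rule: trancl_induct)
    case (step b c)
    then show ?case using HomD[OF hom] \<open>trans (arcs R)\<close> by (meson transD)
  qed (rule HomD[OF hom])
  have eq: "a = b" if "(a,b) \<in> ?E\<^sup>*" and "\<phi> a = \<phi> b" for a b
    using that
  proof (induction rule: converse_rtrancl_induct)
    case (step a c)
    have "(\<phi> a, \<phi> c) \<in> arcs R" using HomD[OF hom step.hyps(1)] .
    moreover have "\<phi> c = \<phi> b \<or> (\<phi> c, \<phi> b) \<in> arcs R"
      using step.hyps(2) arc by (metis rtrancl_eq_or_trancl)
    ultimately have "\<phi> a = \<phi> c"
      using step.prems \<open>antisym (arcs R)\<close> by (metis antisymD)
    then show ?case
      using StrictD[OF \<phi> step.hyps(1)] step.IH step.prems by metis
  qed simp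
  show ?thesis
  proof (rule StrictI)
    show "\<phi> \<in> Hom (verts G, ?E\<^sup>+) R"
      using hom arc by (auto simp: Hom_def verts_def arcs_def)
    show "\<phi> a \<noteq> \<phi> b" if "(a,b) \<in> arcs (verts G, ?E\<^sup>+)" and "a \<noteq> b" for a b
      using that eq by (auto simp: arcs_def dest: trancl_into_rtrancl)
  qed
qed

lemma quot_verts: "verts (quot G \<xi>) = Gam G \<xi> ` verts G"
  unfolding quot_def verts_def Let_def by simp

lemma quot_arcs:
  "arcs (quot G \<xi>) = {(a,b). a \<in> Gam G \<xi> ` verts G \<and> b \<in> Gam G \<xi> ` verts G \<and>
     (\<exists>x\<in>a. \<exists>y\<in>b. (x,y) \<in> arcs G)}"
  unfolding quot_def arcs_def Let_def by simp

lemma tquot_verts: "verts (tquot G \<xi>) = verts (quot G \<xi>)"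
  unfolding tquot_def verts_def by simp

lemma tquot_arcs: "arcs (tquot G \<xi>) = (arcs (quot G \<xi>))\<^sup>+"
  unfolding tquot_def arcs_def by simp

lemma quot_arcs_subset: "arcs (quot G \<xi>) \<subseteq> verts (quot G \<xi>) \<times> verts (quot G \<xi>)"
  unfolding quot_arcs quot_verts by auto

lemma arcs_quot_subset_tquot: "arcs (quot G \<xi>) \<subseteq> arcs (tquot G \<xi>)"
  unfolding tquot_arcs by auto

lemma tquot_arcs_subset: "arcs (tquot G \<xi>) \<subseteq> verts (tquot G \<xi>) \<times> verts (tquot G \<xi>)"
  unfolding tquot_arcs tquot_verts using quot_arcs_subset trancl_subset_Sigma by blast

lemma quot_cong:
  assumes "\<forall>v\<in>verts G. Gam G \<xi>1 v = Gam G \<xi>2 v"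
  shows "quot G \<xi>1 = quot G \<xi>2"
proof -
  have "Gam G \<xi>1 ` verts G = Gam G \<xi>2 ` verts G"
    using assms by (simp cong: image_cong)
  then show ?thesis
    unfolding quot_def Let_def by simp
qed

lemma quot_vertex_eq_Gam:
  assumes "a \<in> verts (quot G \<xi>)" and "x \<in> a"
  shows "x \<in> verts G \<and> a = Gam G \<xi> x"
proof -
  obtain v where v: "v \<in> verts G" "a = Gam G \<xi> v"
    using assms(1) unfolding quot_verts by blast
  then show ?thesis
    using assms(2) mem_Gam_imp_fibre[OF v(1)] Gam_eq_if_mem[OF v(1)] by metis
qed

lemma quot_arcsE:
  assumes "(a,b) \<in> arcs (quot G \<xi>)"
  obtains x y where "x \<in> verts G" "y \<in> verts G" "(x,y) \<in> arcs G"
    and "a = Gam G \<xi> x" "b = Gam G \<xi> y"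
proof -
  obtain x y where "x \<in> a" "y \<in> b" "(x,y) \<in> arcs G"
    and "a \<in> verts (quot G \<xi>)" "b \<in> verts (quot G \<xi>)"
    using assms unfolding quot_arcs quot_verts by blast
  then show ?thesis
    using that quot_vertex_eq_Gam by metis
qed

lemma Gam_arc_in_quot:
  assumes "arcs G \<subseteq> verts G \<times> verts G" and "(v,w) \<in> arcs G"
  shows "(Gam G \<xi> v, Gam G \<xi> w) \<in> arcs (quot G \<xi>)"
  using assms mem_Gam_self[of v G \<xi>] mem_Gam_self[of w G \<xi>] unfolding quot_arcs by blast

lemma iota_map_Gam:
  assumes v: "v \<in> verts G"
  shows "iota_map G \<xi> (Gam G \<xi> v) = \<xi> v"
proof -
  define u where "u = (SOME u. u \<in> verts G \<and> Gam G \<xi> v = Gam G \<xi> u)"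
  have u: "u \<in> verts G \<and> Gam G \<xi> v = Gam G \<xi> u"
    unfolding u_def by (rule someI[of _ v]) (simp add: v)
  then have "\<xi> u = \<xi> v"
    using mem_Gam_self[of u G \<xi>] mem_Gam_imp_fibre[OF v, of u \<xi>] by simp
  then show ?thesis
    using v unfolding iota_map_def quot_verts u_def by simp
qed

lemma iota_map_Hom_quot:
  assumes "\<xi> \<in> Hom G R"
  shows "iota_map G \<xi> \<in> Hom (quot G \<xi>) R"
proof (rule HomI)
  show "iota_map G \<xi> \<in> verts (quot G \<xi>) \<rightarrow>\<^sub>E verts R"
  proof (rule PiE_I)
    fix c assume "c \<in> verts (quot G \<xi>)"
    then obtain v where "v \<in> verts G" "c = Gam G \<xi> v"
      unfolding quot_verts by blast
    then show "iota_map G \<xi> c \<in> verts R"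
      using Hom_vertex[OF assms] by (simp add: iota_map_Gam)
  qed (simp add: iota_map_def)
next
  fix a b assume "(a,b) \<in> arcs (quot G \<xi>)"
  then show "(iota_map G \<xi> a, iota_map G \<xi> b) \<in> arcs R"
    by (rule quot_arcsE) (auto simp: iota_map_Gam intro: HomD[OF assms])
qed

lemma iota_map_eq_on_arc_imp_eq:
  assumes "(a,b) \<in> arcs (quot G \<xi>)" and "iota_map G \<xi> a = iota_map G \<xi> b"
  shows "a = b"
  using assms(1)
proof (rule quot_arcsE)
  fix x y assume xy: "x \<in> verts G" "y \<in> verts G" "(x,y) \<in> arcs G"
    and ab: "a = Gam G \<xi> x" "b = Gam G \<xi> y"
  then have "\<xi> x = \<xi> y"
    using assms(2) by (simp add: iota_map_Gam)
  with xy have "y \<in> Gam G \<xi> x"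
    by (intro mem_Gam_if_adjacent) (auto simp: adjacent_def)
  then show "a = b"
    using ab Gam_eq_if_mem[OF xy(1) \<open>y \<in> Gam G \<xi> x\<close>] by simp
qed

lemma iota_map_Strict_quot:
  "\<xi> \<in> Hom G R \<Longrightarrow> iota_map G \<xi> \<in> Strict (quot G \<xi>) R"
  by (rule StrictI[OF iota_map_Hom_quot]) (use iota_map_eq_on_arc_imp_eq in blast)+

lemma iota_map_Strict_tquot:
  "\<xi> \<in> Hom G R \<Longrightarrow> trans (arcs R) \<Longrightarrow> antisym (arcs R) \<Longrightarrow> iota_map G \<xi> \<in> Strict (tquot G \<xi>) R"
  unfolding tquot_def by (intro Strict_trancl iota_map_Strict_quot)

lemma pi_map_apply [simp]: "v \<in> verts G \<Longrightarrow> pi_map G \<xi> v = Gam G \<xi> v"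
  by (simp add: pi_map_def)

lemma quotient_lift_Hom:
  assumes G: "arcs G \<subseteq> verts G \<times> verts G" and \<tau>: "\<tau> \<in> Hom (quot G \<xi>) S"
  shows "restrict (\<tau> \<circ> pi_map G \<xi>) (verts G) \<in> Hom G S"
proof (rule HomI)
  show "restrict (\<tau> \<circ> pi_map G \<xi>) (verts G) \<in> verts G \<rightarrow>\<^sub>E verts S"
    using Hom_vertex[OF \<tau>] by (auto simp: quot_verts)
  fix v w assume "(v,w) \<in> arcs G"
  then show "(restrict (\<tau> \<circ> pi_map G \<xi>) (verts G) v, restrict (\<tau> \<circ> pi_map G \<xi>) (verts G) w) \<in> arcs S"
    using G HomD[OF \<tau> Gam_arc_in_quot[OF G]] by auto
qed

lemma Gam_quotient_lift:
  assumes G: "arcs G \<subseteq> verts G \<times> verts G" and \<tau>: "\<tau> \<in> Strict (quot G \<xi>) S"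
    and v: "v \<in> verts G"
  shows "Gam G (restrict (\<tau> \<circ> pi_map G \<xi>) (verts G)) v = Gam G \<xi> v"
proof (rule Gam_cong[OF v])
  fix a b assume a: "a \<in> verts G" and b: "b \<in> verts G" and ab: "adjacent G a b"
  have "\<tau> (Gam G \<xi> a) = \<tau> (Gam G \<xi> b) \<longleftrightarrow> Gam G \<xi> a = Gam G \<xi> b"
    using ab StrictD[OF \<tau> Gam_arc_in_quot[OF G]] unfolding adjacent_def by metis
  also have "\<dots> \<longleftrightarrow> \<xi> a = \<xi> b"
    by (rule adjacent_Gam_eq_iff[OF a b ab])
  finally show "restrict (\<tau> \<circ> pi_map G \<xi>) (verts G) a = restrict (\<tau> \<circ> pi_map G \<xi>) (verts G) b
      \<longleftrightarrow> \<xi> a = \<xi> b"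
    using a b by simp
qed

lemma quotient_lift_eqD:
  assumes G: "arcs G \<subseteq> verts G \<times> verts G"
    and \<tau>1: "\<tau>1 \<in> Strict (quot G \<xi>1) S" and \<tau>2: "\<tau>2 \<in> Strict (quot G \<xi>2) S"
    and eq: "restrict (\<tau>1 \<circ> pi_map G \<xi>1) (verts G) = restrict (\<tau>2 \<circ> pi_map G \<xi>2) (verts G)"
  shows "(\<forall>v\<in>verts G. Gam G \<xi>1 v = Gam G \<xi>2 v) \<and> \<tau>1 = \<tau>2"
proof -
  have Gam: "\<forall>v\<in>verts G. Gam G \<xi>1 v = Gam G \<xi>2 v"
    using Gam_quotient_lift[OF G \<tau>1] Gam_quotient_lift[OF G \<tau>2] eq by metis
  then have "quot G \<xi>1 = quot G \<xi>2" by (rule quot_cong)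
  then have "\<tau>2 \<in> Hom (quot G \<xi>1) S" using Strict_imp_Hom[OF \<tau>2] by simp
  moreover have "\<tau>1 c = \<tau>2 c" if c: "c \<in> verts (quot G \<xi>1)" for c
  proof -
    obtain v where v: "v \<in> verts G" "c = Gam G \<xi>1 v"
      using c unfolding quot_verts by blast
    have "restrict (\<tau>1 \<circ> pi_map G \<xi>1) (verts G) v = restrict (\<tau>2 \<circ> pi_map G \<xi>2) (verts G) v"
      using eq by simp
    then show ?thesis using v Gam by simp
  qed
  ultimately have "\<tau>1 = \<tau>2"
    using Hom_eqI[OF Strict_imp_Hom[OF \<tau>1]] by blast
  with Gam show ?thesis by blast
qed

lemma Hom_eq_if_Gam_eq_iota_map_eq:
  assumes "\<xi>1 \<in> Hom G R" "\<xi>2 \<in> Hom G R" and "\<forall>v\<in>verts G. Gam G \<xi>1 v = Gam G \<xi>2 v"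
    and "iota_map G \<xi>1 = iota_map G \<xi>2"
  shows "\<xi>1 = \<xi>2"
  using assms by (intro Hom_eqI[OF assms(1,2)]) (metis iota_map_Gam)

lemma strong_Gamma_scheme_quotient_lift:
  fixes Q :: "nat digraph \<Rightarrow> (nat \<Rightarrow> 'r) \<Rightarrow> nat set digraph"
    and \<sigma> :: "nat set digraph \<Rightarrow> (nat set \<Rightarrow> 'r) \<Rightarrow> nat set \<Rightarrow> 's"
  assumes digraphs: "\<And>G. G \<in> C \<Longrightarrow> arcs G \<subseteq> verts G \<times> verts G"
    and Q_factors: "\<And>G \<xi>. Q G \<xi> = F (quot G \<xi>)"
    and Q_verts: "\<And>G \<xi>. verts (Q G \<xi>) = verts (quot G \<xi>)"
    and Q_arcs: "\<And>G \<xi>. arcs (quot G \<xi>) \<subseteq> arcs (Q G \<xi>)"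
    and iota_Strict: "\<And>G \<xi>. G \<in> C \<Longrightarrow> \<xi> \<in> Hom G R \<Longrightarrow> iota_map G \<xi> \<in> Strict (Q G \<xi>) R"
    and \<sigma>: "\<And>G \<xi>. G \<in> C \<Longrightarrow> \<xi> \<in> Hom G R \<Longrightarrow>
      \<sigma> (Q G \<xi>) \<in> Strict (Q G \<xi>) R \<rightarrow> Strict (Q G \<xi>) S \<and> inj_on (\<sigma> (Q G \<xi>)) (Strict (Q G \<xi>) R)"
  shows "strong_Gamma_scheme C R S (\<lambda>G \<xi>. restrict (\<sigma> (Q G \<xi>) (iota_map G \<xi>) \<circ> pi_map G \<xi>) (verts G))"
  unfolding strong_Gamma_scheme_def
proof (intro ballI conjI)
  fix G assume G: "G \<in> C"
  define \<tau> where "\<tau> \<xi> = \<sigma> (Q G \<xi>) (iota_map G \<xi>)" for \<xi>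
  have \<tau>: "\<tau> \<xi> \<in> Strict (quot G \<xi>) S" if "\<xi> \<in> Hom G R" for \<xi>
    using \<sigma>[OF G that] iota_Strict[OF G that] Strict_antimono[OF Q_verts[symmetric] Q_arcs]
    unfolding \<tau>_def by blast
  show "restrict (\<tau> \<xi> \<circ> pi_map G \<xi>) (verts G) \<in> Hom G S" if "\<xi> \<in> Hom G R" for \<xi>
    using quotient_lift_Hom[OF digraphs[OF G] Strict_imp_Hom[OF \<tau>[OF that]]] .
  show "Gam G (restrict (\<tau> \<xi> \<circ> pi_map G \<xi>) (verts G)) v = Gam G \<xi> v"
    if "\<xi> \<in> Hom G R" and "v \<in> verts G" for \<xi> v
    using Gam_quotient_lift[OF digraphs[OF G] \<tau>[OF that(1)] that(2)] .
  show "inj_on (\<lambda>\<xi>. restrict (\<tau> \<xi> \<circ> pi_map G \<xi>) (verts G)) (Hom G R)"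
  proof (rule inj_onI)
    fix \<xi>1 \<xi>2 assume \<xi>1: "\<xi>1 \<in> Hom G R" and \<xi>2: "\<xi>2 \<in> Hom G R"
      and "restrict (\<tau> \<xi>1 \<circ> pi_map G \<xi>1) (verts G) = restrict (\<tau> \<xi>2 \<circ> pi_map G \<xi>2) (verts G)"
    then have Gam: "\<forall>v\<in>verts G. Gam G \<xi>1 v = Gam G \<xi>2 v" and "\<tau> \<xi>1 = \<tau> \<xi>2"
      using quotient_lift_eqD[OF digraphs[OF G] \<tau>[OF \<xi>1] \<tau>[OF \<xi>2]] by auto
    have Q: "Q G \<xi>2 = Q G \<xi>1" using quot_cong[OF Gam] Q_factors by simp
    have "\<sigma> (Q G \<xi>1) (iota_map G \<xi>1) = \<sigma> (Q G \<xi>1) (iota_map G \<xi>2)"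
      using \<open>\<tau> \<xi>1 = \<tau> \<xi>2\<close> Q unfolding \<tau>_def by simp
    then have "iota_map G \<xi>1 = iota_map G \<xi>2"
      using \<sigma>[OF G \<xi>1] iota_Strict[OF G \<xi>1] iota_Strict[OF G \<xi>2] Q by (auto dest: inj_onD)
    with \<xi>1 \<xi>2 Gam show "\<xi>1 = \<xi>2" by (rule Hom_eq_if_Gam_eq_iota_map_eq)
  qed
qed

lemma digraph_iso_sym:
  assumes "digraph_iso G H"
  shows "digraph_iso H G"
proof -
  obtain f where f: "bij_betw f (verts G) (verts H)"
    and arcs: "\<forall>v\<in>verts G. \<forall>w\<in>verts G. (v,w) \<in> arcs G \<longleftrightarrow> (f v, f w) \<in> arcs H"
    using assms unfolding digraph_iso_def by blast
  let ?g = "inv_into (verts G) f"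
  have "bij_betw ?g (verts H) (verts G)" by (rule bij_betw_inv_into[OF f])
  moreover have "(v,w) \<in> arcs H \<longleftrightarrow> (?g v, ?g w) \<in> arcs G" if "v \<in> verts H" "w \<in> verts H" for v w
    using that arcs f bij_betw_inv_into_right[OF f] bij_betw_apply[OF bij_betw_inv_into[OF f]] by metis
  ultimately show ?thesis unfolding digraph_iso_def by blast
qed

lemma digraph_iso_trans:
  assumes "digraph_iso G H" and "digraph_iso H K"
  shows "digraph_iso G K"
proof -
  obtain f where f: "bij_betw f (verts G) (verts H)"
    and f_arcs: "\<forall>v\<in>verts G. \<forall>w\<in>verts G. (v,w) \<in> arcs G \<longleftrightarrow> (f v, f w) \<in> arcs H"
    using assms(1) unfolding digraph_iso_def by blast
  obtain g where g: "bij_betw g (verts H) (verts K)"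
    and g_arcs: "\<forall>v\<in>verts H. \<forall>w\<in>verts H. (v,w) \<in> arcs H \<longleftrightarrow> (g v, g w) \<in> arcs K"
    using assms(2) unfolding digraph_iso_def by blast
  have "bij_betw (g \<circ> f) (verts G) (verts K)" by (rule bij_betw_trans[OF f g])
  moreover have "\<forall>v\<in>verts G. \<forall>w\<in>verts G. (v,w) \<in> arcs G \<longleftrightarrow> ((g \<circ> f) v, (g \<circ> f) w) \<in> arcs K"
    using f_arcs g_arcs bij_betw_apply[OF f] by simp
  ultimately show ?thesis unfolding digraph_iso_def by blast
qed

lemma digraph_iso_trans_antisym:
  assumes iso: "digraph_iso G H" and H: "arcs H \<subseteq> verts H \<times> verts H"
    and "trans (arcs G)" and "antisym (arcs G)"
  shows "trans (arcs H) \<and> antisym (arcs H)"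
proof -
  obtain g where g: "bij_betw g (verts H) (verts G)"
    and arcs: "\<forall>v\<in>verts H. \<forall>w\<in>verts H. (v,w) \<in> arcs H \<longleftrightarrow> (g v, g w) \<in> arcs G"
    using digraph_iso_sym[OF iso] unfolding digraph_iso_def by blast
  have "trans (arcs H)"
  proof (rule transI)
    fix a b c assume ab: "(a,b) \<in> arcs H" and bc: "(b,c) \<in> arcs H"
    then have v: "a \<in> verts H" "c \<in> verts H" and "b \<in> verts H"
      using H by auto
    then have "(g a, g b) \<in> arcs G" and "(g b, g c) \<in> arcs G"
      using arcs ab bc by blast+
    then have "(g a, g c) \<in> arcs G"
      using \<open>trans (arcs G)\<close> by (blast dest: transD)
    then show "(a,c) \<in> arcs H"
      using arcs v by blast
  qed
  moreover have "antisym (arcs H)"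
  proof (rule antisymI)
    fix a b assume ab: "(a,b) \<in> arcs H" and ba: "(b,a) \<in> arcs H"
    then have v: "a \<in> verts H" "b \<in> verts H"
      using H by auto
    then have "(g a, g b) \<in> arcs G" and "(g b, g a) \<in> arcs G"
      using arcs ab ba by blast+
    then have "g a = g b"
      using \<open>antisym (arcs G)\<close> by (blast dest: antisymD)
    then show "a = b"
      using inj_onD[OF bij_betw_imp_inj_on[OF g] _ v] by blast
  qed
  ultimately show ?thesis ..
qed

lemma trans_antisym_if_poset_or_poset_star:
  assumes "is_poset G \<or> is_poset_star G"
  shows "trans (arcs G) \<and> antisym (arcs G)"
  using assms
proof
  assume "is_poset_star G"
  then obtain P where P: "is_poset P" and G: "arcs G = {(v,w) \<in> arcs P. v \<noteq> w}"
    unfolding is_poset_star_def remove_loops_def by (auto simp: arcs_def)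
  then have "trans (arcs P)" and "antisym (arcs P)"
    unfolding is_poset_def by blast+
  have "trans (arcs G)"
  proof (rule transI)
    fix x y z assume "(x,y) \<in> arcs G" and "(y,z) \<in> arcs G"
    then have "(x,y) \<in> arcs P" "(y,z) \<in> arcs P" "x \<noteq> y"
      by (simp_all add: G)
    then have "(x,z) \<in> arcs P" and "x \<noteq> z"
      using \<open>trans (arcs P)\<close> \<open>antisym (arcs P)\<close> by (blast dest: transD antisymD)+
    then show "(x,z) \<in> arcs G"
      by (simp add: G)
  qed
  moreover have "antisym (arcs G)"
    using \<open>antisym (arcs P)\<close> by (rule antisym_subset[rotated]) (auto simp: G)
  ultimately show ?thesis ..
qed (simp add: is_poset_def)

lemma Strict_lepoll_if_iso:
  assumes iso: "digraph_iso h g" and h: "arcs h \<subseteq> verts h \<times> verts h"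
  shows "Strict g X \<lesssim> Strict h X"
proof -
  obtain f where f: "bij_betw f (verts h) (verts g)"
    and arcs: "\<forall>v\<in>verts h. \<forall>w\<in>verts h. (v,w) \<in> arcs h \<longleftrightarrow> (f v, f w) \<in> arcs g"
    using iso unfolding digraph_iso_def by blast
  let ?pull = "\<lambda>\<zeta>. restrict (\<zeta> \<circ> f) (verts h)"
  have "?pull \<zeta> \<in> Strict h X" if \<zeta>: "\<zeta> \<in> Strict g X" for \<zeta>
  proof (rule StrictI)
    show "?pull \<zeta> \<in> Hom h X"
      using h arcs bij_betw_apply[OF f] Hom_vertex[OF Strict_imp_Hom[OF \<zeta>]]
        HomD[OF Strict_imp_Hom[OF \<zeta>]]
      by (intro HomI) (auto 4 3)
    show "?pull \<zeta> v \<noteq> ?pull \<zeta> w" if "(v,w) \<in> arcs h" and "v \<noteq> w" for v w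
      using that h arcs StrictD[OF \<zeta>] bij_betw_imp_inj_on[OF f] by (fastforce simp: inj_on_def)
  qed
  moreover have "inj_on ?pull (Strict g X)"
  proof (rule inj_onI)
    fix \<zeta>1 \<zeta>2 assume "\<zeta>1 \<in> Strict g X" "\<zeta>2 \<in> Strict g X" and eq: "?pull \<zeta>1 = ?pull \<zeta>2"
    then show "\<zeta>1 = \<zeta>2"
    proof (intro Hom_eqI[OF Strict_imp_Hom Strict_imp_Hom])
      fix c assume "c \<in> verts g"
      then obtain v where "v \<in> verts h" "c = f v"
        using f unfolding bij_betw_def by blast
      then show "\<zeta>1 c = \<zeta>2 c" using fun_cong[OF eq, of v] by simp
    qed
  qed
  ultimately show ?thesis
    unfolding lepoll_def' by blast
qed

lemma Strict_lepoll_if_strong_Gamma_scheme: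
  assumes "strong_Gamma_scheme C R S \<rho>" and "h \<in> C" and h: "arcs h \<subseteq> verts h \<times> verts h"
  shows "Strict h R \<lesssim> Strict h S"
proof -
  have \<rho>: "\<forall>\<xi>\<in>Hom h R. \<rho> h \<xi> \<in> Hom h S" "inj_on (\<rho> h) (Hom h R)"
    "\<forall>\<xi>\<in>Hom h R. \<forall>v\<in>verts h. Gam h (\<rho> h \<xi>) v = Gam h \<xi> v"
    using assms(1,2) unfolding strong_Gamma_scheme_def by blast+
  have "\<rho> h \<zeta> \<in> Strict h S" if \<zeta>: "\<zeta> \<in> Strict h R" for \<zeta>
  proof -
    have "\<zeta> \<in> Hom h R" using \<zeta> by (rule Strict_imp_Hom)
    then have hom: "\<rho> h \<zeta> \<in> Hom h S" and "\<forall>v\<in>verts h. Gam h (\<rho> h \<zeta>) v = Gam h \<zeta> v"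
      using \<rho>(1,3) by blast+
    moreover have "\<forall>v\<in>verts h. Gam h \<zeta> v = {v}"
      using \<zeta> Strict_iff_Gam_singleton[OF h \<open>\<zeta> \<in> Hom h R\<close>] by blast
    ultimately show ?thesis
      using Strict_iff_Gam_singleton[OF h hom] by simp
  qed
  moreover have "inj_on (\<rho> h) (Strict h R)"
    using \<rho>(2) by (rule inj_on_subset) (auto simp: Strict_def)
  ultimately show ?thesis
    unfolding lepoll_def' by blast
qed

lemma Strict_lepoll_if_Gamma_below:
  assumes reps: "is_rep_system C Cr" and digraphs: "\<forall>G\<in>C. is_digraph G"
    and "Gamma_below Cr R S" and "in_class C g" and g: "arcs g \<subseteq> verts g \<times> verts g"
  shows "Strict g R \<lesssim> Strict g S"
proof -
  obtain \<rho> where \<rho>: "strong_Gamma_scheme Cr R S \<rho>"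
    using \<open>Gamma_below Cr R S\<close> unfolding Gamma_below_def by blast
  obtain G0 where "G0 \<in> C" and "digraph_iso G0 g"
    using \<open>in_class C g\<close> unfolding in_class_def by blast
  then obtain h where "h \<in> Cr" and "digraph_iso h g"
    using reps unfolding is_rep_system_def by (meson digraph_iso_sym digraph_iso_trans)
  then have h: "arcs h \<subseteq> verts h \<times> verts h"
    using reps digraphs unfolding is_rep_system_def is_digraph_def by blast
  have "Strict g R \<lesssim> Strict h R"
    using \<open>digraph_iso h g\<close> h by (rule Strict_lepoll_if_iso)
  also have "\<dots> \<lesssim> Strict h S"
    using \<rho> \<open>h \<in> Cr\<close> h by (rule Strict_lepoll_if_strong_Gamma_scheme)
  also have "\<dots> \<lesssim> Strict g S"
    using digraph_iso_sym[OF \<open>digraph_iso h g\<close>] g by (rule Strict_lepoll_if_iso)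
  finally show ?thesis .
qed

text \<open>\<open>Q\<close> stands for either the quotient digraph or its transitive hull.\<close>

lemma Gamma_below_criterion:
  fixes Q :: "nat digraph \<Rightarrow> (nat \<Rightarrow> 'r) \<Rightarrow> nat set digraph"
    and R :: "'r digraph" and S :: "'s digraph"
  assumes digraphs: "\<forall>G\<in>C. is_digraph G" and reps: "is_rep_system C Cr"
    and Q_factors: "\<And>G \<xi>. Q G \<xi> = F (quot G \<xi>)"
    and Q_verts: "\<And>G \<xi>. verts (Q G \<xi>) = verts (quot G \<xi>)"
    and Q_arcs: "\<And>G \<xi>. arcs (quot G \<xi>) \<subseteq> arcs (Q G \<xi>)"
    and Q_digraph: "\<And>G \<xi>. arcs (Q G \<xi>) \<subseteq> verts (Q G \<xi>) \<times> verts (Q G \<xi>)"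
    and iota_Strict: "\<forall>G\<in>C. \<forall>\<xi>\<in>Hom G R. iota_map G \<xi> \<in> Strict (Q G \<xi>) R"
  shows "(\<forall>G\<in>C. \<forall>\<xi>\<in>Hom G R. in_class C (Q G \<xi>)) \<longrightarrow> (Gamma_below Cr R S \<longleftrightarrow>
      (\<forall>G\<in>C. \<forall>\<xi>\<in>Hom G R. \<exists>\<sigma>. \<sigma> \<in> Strict (Q G \<xi>) R \<rightarrow> Strict (Q G \<xi>) S \<and>
         inj_on \<sigma> (Strict (Q G \<xi>) R))) \<and>
    (\<forall>\<sigma> :: nat set digraph \<Rightarrow> (nat set \<Rightarrow> 'r) \<Rightarrow> (nat set \<Rightarrow> 's).
      (\<forall>G\<in>C. \<forall>\<xi>\<in>Hom G R. \<sigma> (Q G \<xi>) \<in> Strict (Q G \<xi>) R \<rightarrow> Strict (Q G \<xi>) S \<and>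
         inj_on (\<sigma> (Q G \<xi>)) (Strict (Q G \<xi>) R)) \<longrightarrow>
      strong_Gamma_scheme Cr R S (\<lambda>G \<xi>. restrict (\<sigma> (Q G \<xi>) (iota_map G \<xi>) \<circ> pi_map G \<xi>) (verts G)))"
    (is "?Q_class \<longrightarrow> (_ \<longleftrightarrow> ?injections) \<and> (\<forall>\<sigma>. ?choice \<sigma> \<longrightarrow> ?scheme \<sigma>)")
proof (rule impI)
  assume Q_class: ?Q_class
  have "Cr \<subseteq> C" using reps unfolding is_rep_system_def by blast
  have scheme: "?scheme \<sigma>" if choice: "?choice \<sigma>" for \<sigma>
  proof (rule strong_Gamma_scheme_quotient_lift[OF _ Q_factors Q_verts Q_arcs])
    show "arcs G \<subseteq> verts G \<times> verts G" if "G \<in> Cr" for G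
      using that \<open>Cr \<subseteq> C\<close> digraphs by (auto simp: is_digraph_def)
    show "iota_map G \<xi> \<in> Strict (Q G \<xi>) R" if "G \<in> Cr" and "\<xi> \<in> Hom G R" for G \<xi>
      using that \<open>Cr \<subseteq> C\<close> iota_Strict by blast
    show "\<sigma> (Q G \<xi>) \<in> Strict (Q G \<xi>) R \<rightarrow> Strict (Q G \<xi>) S \<and> inj_on (\<sigma> (Q G \<xi>)) (Strict (Q G \<xi>) R)"
      if "G \<in> Cr" and "\<xi> \<in> Hom G R" for G \<xi>
      using that \<open>Cr \<subseteq> C\<close> choice by blast
  qed
  moreover have "Gamma_below Cr R S \<longleftrightarrow> ?injections"
  proof
    assume "Gamma_below Cr R S"
    then show ?injections
      using Strict_lepoll_if_Gamma_below[OF reps digraphs _ _ Q_digraph] Q_class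
      unfolding lepoll_def' by blast
  next
    assume injections: ?injections
    let ?good = "\<lambda>q \<sigma>. \<sigma> \<in> Strict q R \<rightarrow> Strict q S \<and> inj_on \<sigma> (Strict q R)"
    have "?choice (\<lambda>q. SOME \<sigma>. ?good q \<sigma>)"
    proof (intro ballI)
      fix G \<xi> assume "G \<in> C" and "\<xi> \<in> Hom G R"
      with injections have "\<exists>\<sigma>. ?good (Q G \<xi>) \<sigma>" by blast
      then show "?good (Q G \<xi>) (SOME \<sigma>. ?good (Q G \<xi>) \<sigma>)" by (rule someI_ex)
    qed
    then have "?scheme (\<lambda>q. SOME \<sigma>. ?good q \<sigma>)" by (rule scheme)
    then show "Gamma_below Cr R S"
      unfolding Gamma_below_def by (rule exI[of "strong_Gamma_scheme Cr R S"])
  qed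
  ultimately show "(Gamma_below Cr R S \<longleftrightarrow> ?injections) \<and> (\<forall>\<sigma>. ?choice \<sigma> \<longrightarrow> ?scheme \<sigma>)"
    by blast
qed

theorem proposition2:
  fixes D' Dr :: "nat digraph set" and R :: "'r digraph" and S :: "'s digraph"
  assumes D'_digraphs: "\<forall>G \<in> D'. is_digraph G"
    and reps: "is_rep_system D' Dr"
    and R_in: "in_class D' R"
    and R_dig: "is_digraph R"
    and S_dig: "is_digraph S"
  shows
   "((\<forall>G \<in> D'. \<forall>\<xi> \<in> Hom G R. in_class D' (quot G \<xi>)) \<longrightarrow>
      (Gamma_below Dr R S \<longleftrightarrow>
         (\<forall>G \<in> D'. \<forall>\<xi> \<in> Hom G R. \<exists>\<sigma>.
             \<sigma> \<in> Strict (quot G \<xi>) R \<rightarrow> Strict (quot G \<xi>) S \<and>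
             inj_on \<sigma> (Strict (quot G \<xi>) R))) \<and>
      (\<forall>\<sigma> :: nat set digraph \<Rightarrow> (nat set \<Rightarrow> 'r) \<Rightarrow> (nat set \<Rightarrow> 's).
         (\<forall>G \<in> D'. \<forall>\<xi> \<in> Hom G R.
             \<sigma> (quot G \<xi>) \<in> Strict (quot G \<xi>) R \<rightarrow> Strict (quot G \<xi>) S \<and>
             inj_on (\<sigma> (quot G \<xi>)) (Strict (quot G \<xi>) R)) \<longrightarrow>
         strong_Gamma_scheme Dr R S
           (\<lambda>G \<xi>. restrict (\<sigma> (quot G \<xi>) (iota_map G \<xi>) \<circ> pi_map G \<xi>) (verts G))))
    \<and>
    (((\<forall>G \<in> D'. is_poset G) \<or> (\<forall>G \<in> D'. is_poset_star G)) \<and>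
     (\<forall>G \<in> D'. \<forall>\<xi> \<in> Hom G R. in_class D' (tquot G \<xi>)) \<longrightarrow>
      (Gamma_below Dr R S \<longleftrightarrow>
         (\<forall>G \<in> D'. \<forall>\<xi> \<in> Hom G R. \<exists>\<sigma>.
             \<sigma> \<in> Strict (tquot G \<xi>) R \<rightarrow> Strict (tquot G \<xi>) S \<and>
             inj_on \<sigma> (Strict (tquot G \<xi>) R))) \<and>
      (\<forall>\<sigma> :: nat set digraph \<Rightarrow> (nat set \<Rightarrow> 'r) \<Rightarrow> (nat set \<Rightarrow> 's).
         (\<forall>G \<in> D'. \<forall>\<xi> \<in> Hom G R.
             \<sigma> (tquot G \<xi>) \<in> Strict (tquot G \<xi>) R \<rightarrow> Strict (tquot G \<xi>) S \<and>
             inj_on (\<sigma> (tquot G \<xi>)) (Strict (tquot G \<xi>) R)) \<longrightarrow>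
         strong_Gamma_scheme Dr R S
           (\<lambda>G \<xi>. restrict (\<sigma> (tquot G \<xi>) (iota_map G \<xi>) \<circ> pi_map G \<xi>) (verts G))))"
proof -
  have iota_quot: "\<forall>G \<in> D'. \<forall>\<xi> \<in> Hom G R. iota_map G \<xi> \<in> Strict (quot G \<xi>) R"
    by (simp add: iota_map_Strict_quot)
  have iota_tquot: "\<forall>G \<in> D'. \<forall>\<xi> \<in> Hom G R. iota_map G \<xi> \<in> Strict (tquot G \<xi>) R"
    if "(\<forall>G \<in> D'. is_poset G) \<or> (\<forall>G \<in> D'. is_poset_star G)"
  proof -
    obtain G0 where "G0 \<in> D'" and "digraph_iso G0 R"
      using R_in unfolding in_class_def by blast
    with that have "trans (arcs G0) \<and> antisym (arcs G0)"
      using trans_antisym_if_poset_or_poset_star by blast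
    with \<open>digraph_iso G0 R\<close> R_dig have "trans (arcs R) \<and> antisym (arcs R)"
      using digraph_iso_trans_antisym unfolding is_digraph_def by blast
    then show ?thesis by (simp add: iota_map_Strict_tquot)
  qed
  note quot_criterion = Gamma_below_criterion[where Q = quot and F = id, OF D'_digraphs reps
      id_apply[symmetric] refl order_refl quot_arcs_subset iota_quot]
  note tquot_criterion = Gamma_below_criterion[where Q = tquot and F = "\<lambda>q. (verts q, (arcs q)\<^sup>+)",
      OF D'_digraphs reps tquot_def tquot_verts arcs_quot_subset_tquot tquot_arcs_subset iota_tquot]
  show ?thesis
    by (rule conjI[OF quot_criterion], intro impI, elim conjE) (rule tquot_criterion[THEN mp])
qed

end
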